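(* Let $d,n$ be positive integers with $d\le n$. If $S\subseteq\mathbb{Z}_{2^n}$ is a union of some of the layers $L_1,\dots,L_{n+1}$ and $|S|>|\mathcal{C}_d|$, then $S$ contains a projective $d$-cube, i.e.\ there is a multiset $T$ of $d$ elements of $\mathbb{Z}_{2^n}$ with $\Sigma^*T\subseteq S$.
   Context: For a multiset $T=\{a_1,\dots,a_d\}$ of (not necessarily distinct) elements of $\mathbb{Z}_{2^n}$, $\Sigma^*T=\{\sum_{i\in I}a_i \bmod 2^n:\emptyset\ne I\subseteq[d]\}$. Layers: for $1\le i\le n$, $L_i=\{x\in\mathbb{Z}_{2^n}: x\equiv 2^{i-1}\pmod{2^i}\}$, $L_{n+1}=\{0\}$. Define index sets $I_1=\emptyset$ and, for $d\ge2$ with $\ell$ the largest integer with $2^\ell\le d$, $I_d=\{1,\dots,\ell\}\cup\{j+\ell+1: j\in I_{d-2^\ell+1}\}$; set $\mathcal{C}_d=\bigcup_{i\in I_d}L_i$ (for $d\le n$ all indices are at most $n$). *)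

theory Defs
  imports Main "HOL-Library.Multiset"
begin

text \<open>Elements of Z_{2^n} are represented by natural numbers below 2^n.\<close>

definition layer :: "nat \<Rightarrow> nat \<Rightarrow> nat set" where
  "layer n i = (if i = n + 1 then {0}
     else {x. x < 2^n \<and> x mod 2^i = 2^(i-1)})"

definition subset_sums :: "nat \<Rightarrow> nat multiset \<Rightarrow> nat set" where
  "subset_sums n T = {sum_mset U mod 2^n | U. U \<subseteq># T \<and> U \<noteq> {#}}"

definition ell :: "nat \<Rightarrow> nat" where
  "ell d = (GREATEST l. (2::nat)^l \<le> d)"

lemma ell_ge1: assumes "2 \<le> d" shows "1 \<le> ell d"
proof -
  have b: "\<forall>y. 2^y \<le> d \<longrightarrow> y \<le> d"
    using less_exp by (metis le_trans less_imp_le_nat)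
  have "(2::nat)^1 \<le> d" using assms by simp
  then show ?thesis unfolding ell_def using Greatest_le_nat[of "\<lambda>l. (2::nat)^l \<le> d" 1 d] b by blast
qed

function Iset :: "nat \<Rightarrow> nat set" where
  "Iset d = (if d \<le> 1 then {}
     else {1..ell d} \<union> (\<lambda>j. j + ell d + 1) ` Iset (d - 2^ell d + 1))"
  by auto
termination
proof (relation "measure id")
  fix d :: nat assume "\<not> d \<le> 1"
  then have "1 \<le> ell d" using ell_ge1 by simp
  then have "(2::nat) \<le> 2 ^ ell d"
    by (metis power_increasing power_one_right zero_less_numeral numeral_le_one_iff semiring_norm(69) one_le_numeral)
  then show "(d - 2 ^ ell d + 1, d) \<in> measure id" using \<open>\<not> d \<le> 1\<close> by simp
qed auto

definition Cset :: "nat \<Rightarrow> nat \<Rightarrow> nat set" where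
  "Cset n d = (\<Union>i\<in>Iset d. layer n i)"

end

theory Submission
  imports Defs
begin

(* Induction on d, with 2^l \<le> d < 2^(l+1). The layers L_1, ..., L_l are exactly the
   non-multiples of 2^l; they lie in C_d, and each of them is at least as large as the
   set of all multiples of 2^l. So a union of layers S with |S| > |C_d| cannot miss any
   of them. If S also contains L_(l+1), i.e. 2^l, then d ones form a cube: their subset
   sums 1, ..., d are non-multiples of 2^l or equal to 2^l. Otherwise every element of S
   outside L_1, ..., L_l is 2^(l+1) y with y in a union of layers S' of Z_(2^(n-l-1));
   since C_d contains L_1, ..., L_l and 2^(l+1) C_d' with d' = d - 2^l + 1, S' is larger
   than C_d'. A d'-cube T' in S' yields the d-cube made of 2^l - 1 ones and 2^(l+1) T':
   a subset sum using j \<ge> 1 of the ones has 0 < j < 2^l, hence is no multiple of 2^l. *)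

lemma le_if_pow2_le: "2 ^ y \<le> (d::nat) \<Longrightarrow> y \<le> d"
  using less_exp[of y] by linarith

lemma pow_ell_le: "1 \<le> d \<Longrightarrow> 2 ^ ell d \<le> d"
  unfolding ell_def
  by (rule GreatestI_nat[where P = "\<lambda>l. (2::nat) ^ l \<le> d" and k = 0 and b = d])
    (auto intro: le_if_pow2_le)

lemma less_pow_Suc_ell: "d < 2 ^ Suc (ell d)"
proof (rule ccontr)
  assume "\<not> d < 2 ^ Suc (ell d)"
  then have "Suc (ell d) \<le> ell d"
    unfolding ell_def
    by (intro Greatest_le_nat[where P = "\<lambda>l. (2::nat) ^ l \<le> d" and b = d])
      (auto intro: le_if_pow2_le)
  then show False by simp
qed

lemma Iset_step: "2 \<le> d \<Longrightarrow> Iset d = {1..ell d} \<union> (\<lambda>j. j + ell d + 1) ` Iset (d - 2 ^ ell d + 1)"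
  by (subst Iset.simps) simp

declare Iset.simps [simp del]

lemma mod_pow_Suc_eq_pow_iff:
  "(x::nat) mod 2 ^ Suc k = 2 ^ k \<longleftrightarrow> 2 ^ k dvd x \<and> \<not> 2 ^ Suc k dvd x"
proof -
  have digits: "x mod (2 * 2 ^ k) = 2 ^ k * (x div 2 ^ k mod 2) + x mod 2 ^ k"
    using mod_mult2_eq'[of x "2 ^ k" 2] by (simp add: mult.commute)
  have "x mod 2 ^ k \<noteq> 2 ^ k" by (metis mod_less_divisor nless_le zero_less_numeral zero_less_power)
  moreover have "x div 2 ^ k mod 2 = 0 \<or> x div 2 ^ k mod 2 = 1" by presburger
  ultimately show ?thesis
    by (elim disjE) (auto simp: digits dvd_eq_mod_eq_0)
qed

lemma exists_exact_pow2_dvd: "\<not> (2::nat) ^ l dvd x \<Longrightarrow> \<exists>i<l. 2 ^ i dvd x \<and> \<not> 2 ^ Suc i dvd x"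
  by (induction l) (auto intro: less_SucI)

lemma mult_pow_less_pow_iff: "2 ^ k * q < (2::nat) ^ n \<longleftrightarrow> q < 2 ^ (n - k)"
proof (cases "k \<le> n")
  case True
  then have "(2::nat) ^ n = 2 ^ k * 2 ^ (n - k)" by (simp add: power_add[symmetric])
  then show ?thesis by simp
next
  case False
  then have "(2::nat) ^ n < 2 ^ k" by simp
  then have "\<not> 2 ^ k * q < (2::nat) ^ n" if "q \<noteq> 0"
    using that by (metis One_nat_def Suc_leI less_le_trans mult.right_neutral mult_le_mono2 neq0_conv not_less_iff_gr_or_eq)
  then show ?thesis using False by (cases "q = 0") auto
qed

lemma card_multiples_below_pow: "card {y::nat. y < 2 ^ n \<and> 2 ^ k dvd y} = 2 ^ (n - k)"
proof -
  have "{y::nat. y < 2 ^ n \<and> 2 ^ k dvd y} = (*) (2 ^ k) ` {..<2 ^ (n - k)}"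
  proof (intro set_eqI iffI)
    fix y assume "y \<in> {y::nat. y < 2 ^ n \<and> 2 ^ k dvd y}"
    then obtain q where "y = 2 ^ k * q" "2 ^ k * q < (2::nat) ^ n" by blast
    then show "y \<in> (*) (2 ^ k) ` {..<2 ^ (n - k)}"
      using mult_pow_less_pow_iff by blast
  qed (auto simp: mult_pow_less_pow_iff)
  moreover have "inj_on ((*) ((2::nat) ^ k)) A" for A by (simp add: inj_on_def)
  ultimately show ?thesis by (simp add: card_image)
qed

lemma layer_subset: "layer n i \<subseteq> {..<2 ^ n}"
  by (auto simp: layer_def)

lemma layer_iff:
  assumes "1 \<le> i" "i \<le> n"
  shows "x \<in> layer n i \<longleftrightarrow> x < 2 ^ n \<and> 2 ^ (i - 1) dvd x \<and> \<not> 2 ^ i dvd x"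
  using mod_pow_Suc_eq_pow_iff[of x "i - 1"] assms by (simp add: layer_def)

lemma layers_disjoint:
  assumes "i \<noteq> j" shows "layer n i \<inter> layer n j = {}"
proof -
  have no_zero: "0 \<notin> layer n i" if "i \<noteq> n + 1" for i
    using that by (simp add: layer_def)
  have different_mod: "x mod 2 ^ i \<noteq> 2 ^ (i - 1)" if "i < j" "x mod 2 ^ j = 2 ^ (j - 1)" for x i j :: nat
  proof -
    have "x mod 2 ^ i = 2 ^ (j - 1) mod 2 ^ i"
      using that by (metis le_imp_power_dvd less_imp_le_nat mod_mod_cancel)
    also have "\<dots> = 0"
      using that(1) by (simp add: le_imp_power_dvd)
    finally show ?thesis by simp
  qed
  show ?thesis
  proof (rule ccontr)
    assume "layer n i \<inter> layer n j \<noteq> {}"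
    then obtain x where x: "x \<in> layer n i" "x \<in> layer n j" by blast
    then have "i \<noteq> n + 1" "j \<noteq> n + 1"
      using assms no_zero[of i] no_zero[of j] by (auto simp: layer_def)
    then have "x mod 2 ^ i = 2 ^ (i - 1)" "x mod 2 ^ j = 2 ^ (j - 1)"
      using x by (simp_all add: layer_def)
    then show False
      using assms different_mod by (metis linorder_neqE_nat)
  qed
qed

lemma exists_layer_below:
  assumes "x < 2 ^ n" "\<not> 2 ^ l dvd x"
  shows "\<exists>i. 1 \<le> i \<and> i \<le> l \<and> i \<le> n \<and> x \<in> layer n i"
proof -
  obtain i where i: "i < l" "2 ^ i dvd x" "\<not> 2 ^ Suc i dvd x"
    using exists_exact_pow2_dvd assms(2) by blast
  have "x \<noteq> 0" using i(3) by (metis dvd_0_right)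
  then have "2 ^ i < (2::nat) ^ n"
    using i(2) assms(1) by (meson dvd_imp_le le_less_trans not_gr0)
  then have "Suc i \<le> n" by simp
  then show ?thesis
    using i assms(1) layer_iff[of "Suc i" n x] by (intro exI[of _ "Suc i"]) simp
qed

lemma mult_pow_layer:
  assumes "y \<in> layer m j" shows "2 ^ k * y \<in> layer (m + k) (j + k)"
proof (cases "j = m + 1")
  case True
  then show ?thesis using assms by (simp add: layer_def)
next
  case False
  then have y: "y < 2 ^ m" "y mod 2 ^ j = 2 ^ (j - 1)"
    using assms by (auto simp: layer_def)
  then have "1 \<le> j" by (cases j) auto
  have "2 ^ k * y < (2::nat) ^ (m + k)"
    using y(1) by (simp add: power_add)
  moreover have "(2 ^ k * y) mod 2 ^ (j + k) = 2 ^ k * (y mod 2 ^ j)"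
    by (metis mult_mod_right power_add mult.commute)
  moreover have "2 ^ k * (2::nat) ^ (j - 1) = 2 ^ (j + k - 1)"
    using \<open>1 \<le> j\<close> by (simp flip: power_add)
  ultimately show ?thesis
    using False y(2) by (simp add: layer_def)
qed

(* For k \<le> n this is the union of the layers L_1, ..., L_k. *)
definition nonmultiples :: "nat \<Rightarrow> nat \<Rightarrow> nat set" where
  "nonmultiples n k = {x. x < 2 ^ n \<and> \<not> 2 ^ k dvd x}"

lemma card_nonmultiples: "card (nonmultiples n k) = 2 ^ n - 2 ^ (n - k)"
proof -
  have "nonmultiples n k = {..<2 ^ n} - {y. y < 2 ^ n \<and> 2 ^ k dvd y}"
    by (auto simp: nonmultiples_def)
  then show ?thesis
    by (simp add: card_Diff_subset card_multiples_below_pow subset_eq)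
qed

lemma card_layer:
  assumes "1 \<le> i" "i \<le> n" shows "card (layer n i) = 2 ^ (n - i)"
proof -
  have "layer n i = {y. y < 2 ^ n \<and> 2 ^ (i - 1) dvd y} - {y. y < 2 ^ n \<and> 2 ^ i dvd y}"
    using layer_iff[OF assms] by auto
  moreover have "{y. y < 2 ^ n \<and> 2 ^ i dvd y} \<subseteq> {y. y < (2::nat) ^ n \<and> 2 ^ (i - 1) dvd y}"
    using le_imp_power_dvd[of "i - 1" i 2] by (auto intro: dvd_trans)
  moreover have "(2::nat) ^ (n - (i - 1)) = 2 * 2 ^ (n - i)"
    using assms by (simp add: Suc_diff_le flip: power_Suc)
  ultimately show ?thesis
    by (simp add: card_Diff_subset card_multiples_below_pow)
qed

(* Equivalent to being a union of layers, but in a form inherited by the rescaled sets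
   of layer_closed_rescale. *)
definition layer_closed :: "nat \<Rightarrow> nat set \<Rightarrow> bool" where
  "layer_closed n S \<longleftrightarrow> S \<subseteq> {..<2 ^ n} \<and> (\<forall>i. S \<inter> layer n i \<noteq> {} \<longrightarrow> layer n i \<subseteq> S)"

lemma layer_closed_UN_layer: "layer_closed n (\<Union>i\<in>J. layer n i)"
  unfolding layer_closed_def
proof (intro conjI allI impI)
  show "(\<Union>i\<in>J. layer n i) \<subseteq> {..<2 ^ n}"
    using layer_subset by blast
  fix i assume "(\<Union>i\<in>J. layer n i) \<inter> layer n i \<noteq> {}"
  then obtain j x where "j \<in> J" "x \<in> layer n j" "x \<in> layer n i" by blast
  then have "i \<in> J"
    using layers_disjoint[of i j n] by blast
  then show "layer n i \<subseteq> (\<Union>i\<in>J. layer n i)" by blast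
qed

lemma layer_closed_rescale:
  assumes "layer_closed (m + k) S" shows "layer_closed m {y. y < 2 ^ m \<and> 2 ^ k * y \<in> S}"
  unfolding layer_closed_def
proof (intro conjI allI impI subsetI)
  fix j z
  assume "{y. y < 2 ^ m \<and> 2 ^ k * y \<in> S} \<inter> layer m j \<noteq> {}" and z: "z \<in> layer m j"
  then obtain y where "2 ^ k * y \<in> S" "y \<in> layer m j" by blast
  then have "2 ^ k * z \<in> S"
    using z assms mult_pow_layer[of _ m j k] unfolding layer_closed_def by blast
  then show "z \<in> {y. y < 2 ^ m \<and> 2 ^ k * y \<in> S}"
    using z layer_subset by blast
qed simp

lemma nonmultiples_subset_if_card_less:
  assumes "layer_closed n S" "card (nonmultiples n l) < card S"
  shows "nonmultiples n l \<subseteq> S"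
proof
  fix x assume x: "x \<in> nonmultiples n l"
  show "x \<in> S"
  proof (rule ccontr)
    assume "x \<notin> S"
    have "x < 2 ^ n" "\<not> 2 ^ l dvd x" using x by (simp_all add: nonmultiples_def)
    then obtain i where i: "1 \<le> i" "i \<le> l" "i \<le> n" "x \<in> layer n i"
      using exists_layer_below by blast
    then have "S \<subseteq> {..<2 ^ n} - layer n i"
      using assms(1) \<open>x \<notin> S\<close> unfolding layer_closed_def by blast
    moreover have "card ({..<2 ^ n} - layer n i) = 2 ^ n - 2 ^ (n - i)"
      using card_layer[OF i(1,3)] layer_subset finite_subset[OF layer_subset]
      by (simp add: card_Diff_subset)
    ultimately have "card S \<le> 2 ^ n - 2 ^ (n - i)"
      by (metis card_mono finite_Diff finite_lessThan)
    also have "\<dots> \<le> 2 ^ n - 2 ^ (n - l)"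
      using i(2) by (intro diff_le_mono2 power_increasing) auto
    finally show False
      using assms(2) card_nonmultiples by simp
  qed
qed

lemma card_le_nonmultiples_plus_rescaled:
  assumes "layer_closed n S" "n = m + l + 1" "2 ^ l \<notin> S"
  shows "card S \<le> card (nonmultiples n l) + card {y. y < 2 ^ m \<and> 2 ^ (l + 1) * y \<in> S}"
    (is "_ \<le> _ + card ?S'")
proof -
  have "S \<subseteq> nonmultiples n l \<union> (*) (2 ^ (l + 1)) ` ?S'"
  proof
    fix x assume "x \<in> S"
    then have "x < 2 ^ n" using assms(1) unfolding layer_closed_def by blast
    consider "\<not> 2 ^ l dvd x" | "2 ^ (l + 1) dvd x" | "2 ^ l dvd x" "\<not> 2 ^ (l + 1) dvd x"
      by blast
    then show "x \<in> nonmultiples n l \<union> (*) (2 ^ (l + 1)) ` ?S'"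
    proof cases
      case 1
      then show ?thesis using \<open>x < 2 ^ n\<close> by (simp add: nonmultiples_def)
    next
      case 2
      then obtain q where "x = 2 ^ (l + 1) * q" by blast
      moreover have "q < 2 ^ m"
        using \<open>x < 2 ^ n\<close> mult_pow_less_pow_iff[of "l + 1" q n] assms(2) calculation by simp
      ultimately show ?thesis using \<open>x \<in> S\<close> by blast
    next
      case 3
      have "(2::nat) ^ l < 2 ^ n" using assms(2) by (intro power_strict_increasing) auto
      then have "x \<in> layer n (l + 1)" "2 ^ l \<in> layer n (l + 1)"
        using 3 \<open>x < 2 ^ n\<close> assms(2) by (simp_all add: layer_iff)
      then have "2 ^ l \<in> S"
        using assms(1) \<open>x \<in> S\<close> unfolding layer_closed_def by blast
      then show ?thesis using assms(3) by blast
    qed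
  qed
  then have "card S \<le> card (nonmultiples n l \<union> (*) (2 ^ (l + 1)) ` ?S')"
    by (intro card_mono) (simp_all add: nonmultiples_def)
  also have "\<dots> \<le> card (nonmultiples n l) + card ((*) (2 ^ (l + 1)) ` ?S')"
    by (rule card_Un_le)
  also have "\<dots> \<le> card (nonmultiples n l) + card ?S'"
    by (intro add_left_mono card_image_le) simp
  finally show ?thesis .
qed

lemma Cset_subset: "Cset n d \<subseteq> {..<2 ^ n}"
  using layer_subset by (auto simp: Cset_def)

lemma nonmultiples_subset_Cset:
  assumes "2 \<le> d" shows "nonmultiples n (ell d) \<subseteq> Cset n d"
  using exists_layer_below Iset_step[OF assms] by (fastforce simp: nonmultiples_def Cset_def)

lemma card_nonmultiples_le_Cset:
  assumes "2 \<le> d" shows "card (nonmultiples n (ell d)) \<le> card (Cset n d)"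
  using nonmultiples_subset_Cset[OF assms] Cset_subset
  by (meson card_mono finite_lessThan finite_subset)

lemma card_Cset_step:
  assumes "2 \<le> d" "n = m + ell d + 1"
  shows "card (nonmultiples n (ell d)) + card (Cset m (d - 2 ^ ell d + 1)) \<le> card (Cset n d)"
proof -
  let ?l = "ell d" and ?C' = "Cset m (d - 2 ^ ell d + 1)"
  have "(*) (2 ^ (?l + 1)) ` ?C' \<subseteq> Cset n d"
  proof
    fix x assume "x \<in> (*) (2 ^ (?l + 1)) ` ?C'"
    then obtain j y where "x = 2 ^ (?l + 1) * y" "j \<in> Iset (d - 2 ^ ?l + 1)" "y \<in> layer m j"
      unfolding Cset_def by blast
    then show "x \<in> Cset n d"
      using mult_pow_layer[of y m j "?l + 1"] Iset_step[OF assms(1)] assms(2)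
      unfolding Cset_def by (fastforce simp: add.assoc)
  qed
  moreover have "nonmultiples n ?l \<inter> (*) (2 ^ (?l + 1)) ` ?C' = {}"
    by (auto simp: nonmultiples_def)
  moreover have "card ((*) (2 ^ (?l + 1)) ` ?C') = card ?C'"
    by (simp add: card_image inj_on_def)
  moreover have "finite (Cset k d)" for k d
    using Cset_subset finite_subset by blast
  ultimately have "card (nonmultiples n ?l) + card ?C' = card (nonmultiples n ?l \<union> (*) (2 ^ (?l + 1)) ` ?C')"
    by (simp add: card_Un_disjoint nonmultiples_def)
  also have "\<dots> \<le> card (Cset n d)"
    using nonmultiples_subset_Cset[OF assms(1)] \<open>(*) (2 ^ (?l + 1)) ` ?C' \<subseteq> Cset n d\<close>
      \<open>finite (Cset n d)\<close> by (intro card_mono) auto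
  finally show ?thesis .
qed

lemma card_Cset_less_rescaled:
  assumes "layer_closed n S" "card (Cset n d) < card S"
    and "2 \<le> d" "n = m + ell d + 1" "2 ^ ell d \<notin> S"
  shows "card (Cset m (d - 2 ^ ell d + 1)) < card {y. y < 2 ^ m \<and> 2 ^ (ell d + 1) * y \<in> S}"
  using card_le_nonmultiples_plus_rescaled[OF assms(1,4,5)] card_Cset_step[OF assms(3,4)] assms(2)
  by linarith

lemma subseteq_image_msetE:
  assumes "W \<subseteq># image_mset f T"
  obtains V where "V \<subseteq># T" "W = image_mset f V"
  using assms
proof (induction T arbitrary: W thesis)
  case empty
  then show ?case by simp
next
  case (add b T)
  show ?case
  proof (cases "f b \<in># W")
    case True
    then have "W - {#f b#} \<subseteq># image_mset f T"
      using add.prems(2) by (simp add: subset_eq_diff_conv)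
    then obtain V where V: "V \<subseteq># T" "W - {#f b#} = image_mset f V"
      using add.IH by blast
    have "W = add_mset (f b) (W - {#f b#})"
      using True by simp
    then have "W = image_mset f (add_mset b V)"
      using V(2) by simp
    moreover have "add_mset b V \<subseteq># add_mset b T"
      using V(1) by simp
    ultimately show ?thesis
      using add.prems(1) by blast
  next
    case False
    then have "W \<subseteq># image_mset f T"
      using add.prems(2) subset_eq_diff_conv[of W "{#f b#}"] by (simp add: diff_single_trivial)
    then obtain V where "V \<subseteq># T" "W = image_mset f V"
      using add.IH by blast
    moreover have "T \<subseteq># add_mset b T"
      by (metis add_mset_add_single mset_subset_eq_add_left)
    ultimately show ?thesis
      using add.prems(1) subset_mset.order_trans by blast
  qed
qed

lemma subset_sums_subset: "subset_sums n T \<subseteq> {..<2 ^ n}"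
  by (auto simp: subset_sums_def)

lemma subset_sums_singleton: "subset_sums n {#x#} = {x mod 2 ^ n}"
proof (intro set_eqI iffI)
  fix s assume "s \<in> subset_sums n {#x#}"
  then obtain U where "U \<subseteq># {#x#}" "U \<noteq> {#}" "s = sum_mset U mod 2 ^ n"
    unfolding subset_sums_def by blast
  moreover from calculation have "U = {#x#}"
    by (intro nonempty_subseteq_mset_eq_single)
  ultimately show "s \<in> {x mod 2 ^ n}" by simp
next
  fix s assume "s \<in> {x mod 2 ^ n}"
  then show "s \<in> subset_sums n {#x#}"
    unfolding subset_sums_def by (intro CollectI exI[of _ "{#x#}"]) simp
qed

lemma subset_sums_ones_plus_scaledE:
  assumes "s \<in> subset_sums n (replicate_mset k 1 + image_mset ((*) c) T)"
  obtains j V where "j \<le> k" "V \<subseteq># T" "j \<noteq> 0 \<or> V \<noteq> {#}" "s = (j + c * sum_mset V) mod 2 ^ n"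
proof -
  let ?R = "replicate_mset k (1::nat)"
  obtain W where W: "W \<subseteq># ?R + image_mset ((*) c) T" "W \<noteq> {#}" "s = sum_mset W mod 2 ^ n"
    using assms unfolding subset_sums_def by blast
  have decomp: "W = W \<inter># ?R + (W - ?R)"
    by (simp add: multiset_eq_iff)
  have sub: "W \<inter># ?R \<subseteq># ?R" by simp
  then have "set_mset (W \<inter># ?R) \<subseteq> {1}"
    using set_mset_mono[OF sub] by (auto split: if_splits)
  then have ones: "W \<inter># ?R = replicate_mset (size (W \<inter># ?R)) 1"
    by (rule set_mset_subset_singletonD)
  have "size (W \<inter># ?R) \<le> k"
    using size_mset_mono[OF sub] by simp
  have "W - ?R \<subseteq># image_mset ((*) c) T"
    using W(1) by (simp add: subset_eq_diff_conv add.commute)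
  then obtain V where V: "V \<subseteq># T" "W - ?R = image_mset ((*) c) V"
    by (rule subseteq_image_msetE)
  have "sum_mset (W - ?R) = c * sum_mset V"
    unfolding V(2) by (induction V) (simp_all add: algebra_simps)
  then have "sum_mset W = size (W \<inter># ?R) + c * sum_mset V"
    by (subst decomp, subst ones(1)) simp
  moreover have "size (W \<inter># ?R) \<noteq> 0 \<or> V \<noteq> {#}"
    using W(2) decomp V(2) by auto
  ultimately show ?thesis
    using that \<open>size (W \<inter># ?R) \<le> k\<close> V(1) W(3) by presburger
qed

definition has_projective_cube :: "nat \<Rightarrow> nat \<Rightarrow> nat set \<Rightarrow> bool" where
  "has_projective_cube n d S \<longleftrightarrow>
     (\<exists>T. size T = d \<and> set_mset T \<subseteq> {..<2 ^ n} \<and> subset_sums n T \<subseteq> S)"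

lemma has_projective_cube_one:
  assumes "layer_closed n S" "S \<noteq> {}" shows "has_projective_cube n 1 S"
proof -
  obtain x where "x \<in> S" using assms(2) by blast
  moreover have "x < 2 ^ n" using calculation assms(1) unfolding layer_closed_def by blast
  ultimately show ?thesis
    unfolding has_projective_cube_def
    by (intro exI[of _ "{#x#}"]) (simp add: subset_sums_singleton)
qed

lemma has_projective_cube_full:
  assumes "S \<subseteq> {..<2 ^ n}" "2 ^ n \<le> card S" shows "has_projective_cube n d S"
proof -
  have "S = {..<2 ^ n}"
    using assms by (intro card_seteq) auto
  then show ?thesis
    unfolding has_projective_cube_def
    using subset_sums_subset by (intro exI[of _ "replicate_mset d 0"]) simp
qed

lemma has_projective_cube_ones:
  assumes "d < 2 ^ Suc l" "l < n" "nonmultiples n l \<subseteq> S" "2 ^ l \<in> S"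
  shows "has_projective_cube n d S"
proof -
  have "subset_sums n (replicate_mset d 1) \<subseteq> S"
  proof
    fix s assume "s \<in> subset_sums n (replicate_mset d 1)"
    then have "s \<in> subset_sums n (replicate_mset d 1 + image_mset ((*) 1) {#})" by simp
    then obtain j where j: "j \<noteq> 0" "j \<le> d" "s = j mod 2 ^ n"
      by (rule subset_sums_ones_plus_scaledE) auto
    have "(2::nat) ^ Suc l \<le> 2 ^ n"
      using assms(2) by (intro power_increasing) auto
    then have "s = j" "j < 2 ^ n"
      using j assms(1) by simp_all
    show "s \<in> S"
    proof (cases "2 ^ l dvd j")
      case True
      then obtain q where "j = 2 ^ l * q" ..
      moreover have "d < 2 ^ l * 2"
        using assms(1) by (simp add: mult.commute)
      ultimately have "2 ^ l * q < 2 ^ l * (2::nat)"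
        using j(2) by linarith
      then have "j = 2 ^ l"
        using j(1) \<open>j = 2 ^ l * q\<close> by (cases q) auto
      then show ?thesis
        using \<open>s = j\<close> assms(4) by simp
    next
      case False
      then show ?thesis
        using assms(3) \<open>s = j\<close> \<open>j < 2 ^ n\<close> by (auto simp: nonmultiples_def)
    qed
  qed
  moreover have "(1::nat) < 2 ^ n"
    using assms(2) by (intro one_less_power) auto
  ultimately show ?thesis
    unfolding has_projective_cube_def by (intro exI[of _ "replicate_mset d 1"]) auto
qed

lemma has_projective_cube_lift:
  assumes "n = m + l + 1" "nonmultiples n l \<subseteq> S"
    and "has_projective_cube m d' {y. y < 2 ^ m \<and> 2 ^ (l + 1) * y \<in> S}"
  shows "has_projective_cube n (2 ^ l - 1 + d') S"
proof -
  let ?c = "2 ^ (l + 1) :: nat"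
  obtain T' where T': "size T' = d'" "set_mset T' \<subseteq> {..<2 ^ m}"
    "subset_sums m T' \<subseteq> {y. y < 2 ^ m \<and> ?c * y \<in> S}"
    using assms(3) unfolding has_projective_cube_def by blast
  let ?T = "replicate_mset (2 ^ l - 1) 1 + image_mset ((*) ?c) T'"
  have "subset_sums n ?T \<subseteq> S"
  proof
    fix s assume "s \<in> subset_sums n ?T"
    then obtain j V where jV: "j \<le> 2 ^ l - 1" "V \<subseteq># T'" "j \<noteq> 0 \<or> V \<noteq> {#}"
      "s = (j + ?c * sum_mset V) mod 2 ^ n"
      by (rule subset_sums_ones_plus_scaledE)
    show "s \<in> S"
    proof (cases "j = 0")
      case True
      then have "sum_mset V mod 2 ^ m \<in> subset_sums m T'"
        using jV(2,3) unfolding subset_sums_def by blast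
      then have "?c * (sum_mset V mod 2 ^ m) \<in> S"
        using T'(3) by blast
      moreover have "(2::nat) ^ n = ?c * 2 ^ m"
        using assms(1) by (simp add: power_add)
      then have "s = (?c * sum_mset V) mod (?c * 2 ^ m)"
        using jV(4) True by simp
      ultimately show ?thesis
        by (simp add: mult.assoc)
    next
      case False
      then have "\<not> 2 ^ l dvd j"
        using jV(1) by (simp add: nat_dvd_not_less)
      moreover have "2 ^ l dvd ?c * sum_mset V" by simp
      ultimately have "\<not> 2 ^ l dvd j + ?c * sum_mset V"
        by (simp add: dvd_add_left_iff)
      moreover have "2 ^ l dvd (2::nat) ^ n"
        using assms(1) by (simp add: le_imp_power_dvd)
      ultimately have "\<not> 2 ^ l dvd s"
        using jV(4) by (simp add: dvd_mod_iff)
      then show ?thesis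
        using assms(2) jV(4) by (auto simp: nonmultiples_def)
    qed
  qed
  moreover have "set_mset ?T \<subseteq> {..<2 ^ n}"
  proof -
    have "(1::nat) < 2 ^ n"
      using assms(1) by (intro one_less_power) auto
    moreover have "?c * y < 2 ^ n" if "y \<in># T'" for y
      using T'(2) that assms(1) mult_pow_less_pow_iff[of "l + 1" y n] by auto
    ultimately show ?thesis by auto
  qed
  ultimately show ?thesis
    unfolding has_projective_cube_def using T'(1) by (intro exI[of _ ?T]) simp
qed

lemma has_projective_cube_if_card_Cset_less:
  assumes "0 < d" "layer_closed n S" "card (Cset n d) < card S"
  shows "has_projective_cube n d S"
  using assms
proof (induction d arbitrary: n S rule: less_induct)
  case (less d)
  show ?case
  proof (cases "d = 1")
    case True
    then show ?thesis
      using less.prems(2,3) has_projective_cube_one by fastforce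
  next
    case False
    then have "2 \<le> d" using less.prems(1) by simp
    define l where "l = ell d"
    have l: "1 \<le> l" "2 ^ l \<le> d" "d < 2 ^ Suc l"
      using ell_ge1 pow_ell_le less_pow_Suc_ell \<open>2 \<le> d\<close> unfolding l_def by auto
    have "card (nonmultiples n l) \<le> card (Cset n d)"
      using card_nonmultiples_le_Cset[OF \<open>2 \<le> d\<close>] unfolding l_def .
    then have "card (nonmultiples n l) < card S"
      using less.prems(3) by linarith
    with less.prems(2) have low: "nonmultiples n l \<subseteq> S"
      by (rule nonmultiples_subset_if_card_less)
    consider "n \<le> l" | "l < n" "2 ^ l \<in> S" | "l < n" "2 ^ l \<notin> S"
      by linarith
    then show ?thesis
    proof cases
      case 1
      then have "2 ^ n \<le> card S"
        using \<open>card (nonmultiples n l) < card S\<close> by (simp add: card_nonmultiples)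
      then show ?thesis
        using less.prems(2) has_projective_cube_full unfolding layer_closed_def by blast
    next
      case 2
      then show ?thesis using has_projective_cube_ones l(3) low by blast
    next
      case 3
      define m where "m = n - l - 1"
      define d' where "d' = d - 2 ^ l + 1"
      let ?S' = "{y. y < 2 ^ m \<and> 2 ^ (l + 1) * y \<in> S}"
      have n: "n = m + l + 1" using 3(1) unfolding m_def by simp
      have "card (Cset m d') < card ?S'"
        using card_Cset_less_rescaled[OF less.prems(2,3) \<open>2 \<le> d\<close>] n 3(2)
        unfolding l_def d'_def by blast
      moreover have "layer_closed m ?S'"
        using layer_closed_rescale[of m "l + 1" S] less.prems(2) n by (simp add: add.assoc)
      moreover have "0 < d'" "d' < d"
        using l(1,2) one_less_power[of "2::nat" l] unfolding d'_def by auto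
      ultimately have "has_projective_cube m d' ?S'"
        using less.IH by blast
      with n low have "has_projective_cube n (2 ^ l - 1 + d') S"
        by (rule has_projective_cube_lift)
      moreover have "2 ^ l - 1 + d' = d"
        using l(2) \<open>2 \<le> d\<close> unfolding d'_def by simp
      ultimately show ?thesis by simp
    qed
  qed
qed

theorem claim3p2:
  fixes d n :: nat and S :: "nat set"
  assumes "0 < d" and "d \<le> n"
    and "\<exists>J \<subseteq> {1..n+1}. S = (\<Union>i\<in>J. layer n i)"
    and "card S > card (Cset n d)"
  shows "\<exists>T :: nat multiset. size T = d \<and> set_mset T \<subseteq> {..<2^n} \<and> subset_sums n T \<subseteq> S"
proof -
  obtain J where "S = (\<Union>i\<in>J. layer n i)"
    using assms(3) by blast
  then have "layer_closed n S"
    by (simp add: layer_closed_UN_layer)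
  then show ?thesis
    using has_projective_cube_if_card_Cset_less assms(1,4) unfolding has_projective_cube_def by blast
qed

end
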